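(* For all $r,i\in\mathbb{Z}$, $\beta\in\Bbbk^*$ and $m\ge0$, the $(m+1)\times(m+1)$ matrix $\mathcal{A}_\beta^{r,i}(m)$ with entries $(\mathcal{A}_\beta^{r,i}(m))_{k,l}=c_\beta^{r,i}(k,l)$ for $0\le l\le k\le m$ and $0$ otherwise is a comatrix over $H$, i.e. $\Delta(c_{kl})=\sum_{p=0}^mc_{kp}\otimes c_{pl}$ and $\varepsilon(c_{kl})=\delta_{k,l}$ for all $0\le k,l\le m$, where $c_{kl}$ denotes the $(k,l)$ entry.
   Context: $\Bbbk$ is an algebraically closed field of characteristic $0$; $n,w$ positive integers, $\gamma$ a primitive $n$-th root of unity. $H=B(n,w,\gamma)$ is the Hopf algebra generated by $x^{\pm1},g,y$ with relations $xx^{-1}=x^{-1}x=1$, $xg=gx$, $xy=yx$, $yg=\gamma gy$, $y^n=1-x^w=1-g^n$, with $\Delta(x)=x\otimes x$, $\Delta(g)=g\otimes g$, $\Delta(y)=y\otimes g+1\otimes y$, $\varepsilon(x)=\varepsilon(g)=1$, $\varepsilon(y)=0$, $S(x)=x^{-1}$, $S(g)=g^{-1}$, $S(y)=-yg^{-1}$. The elements $c_\beta^{r,i}(k,l)\in H$ ($0\le l\le k$) are defined by $c_\beta^{r,i}(0,0)=x^rg^i$ and, for $k\ge0$: $c_\beta^{r,i}(k+1,0)=c_\beta^{r,i}(k,0)S(y)+\beta yc_\beta^{r,i}(k,0)S(g)$; for $0<l<k+1$, $c_\beta^{r,i}(k+1,l)=c_\beta^{r,i}(k,l)S(y)+\beta\gamma^{-l}yc_\beta^{r,i}(k,l)S(g)+c_\beta^{r,i}(k,l-1)S(g)$;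 $c_\beta^{r,i}(k+1,k+1)=c_\beta^{r,i}(k,k)S(g)$. *)

theory Defs
  imports "HOL-Library.Poly_Mapping" "HOL-Computational_Algebra.Polynomial"
begin

text \<open>Concrete model of H = B(n,w,gamma) via its PBW basis x^a g^b y^c
 (a in Z, 0 <= b < n, 0 <= c < n). A basis "word" (a,b,c) stands for x^a g^b y^c;
 words with b >= n or c >= n are reduced using g^n = x^w and y^n = 1 - x^w.\<close>

type_synonym word = "int \<times> nat \<times> nat"
type_synonym 'k H = "word \<Rightarrow>\<^sub>0 'k"
type_synonym 'k HH = "(word \<times> word) \<Rightarrow>\<^sub>0 'k"

definition smul :: "'k::comm_ring_1 \<Rightarrow> ('b \<Rightarrow>\<^sub>0 'k) \<Rightarrow> ('b \<Rightarrow>\<^sub>0 'k)" where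
  "smul c p = Poly_Mapping.map (\<lambda>v. c * v) p"

definition bilin :: "('a \<Rightarrow> 'b \<Rightarrow> ('c \<Rightarrow>\<^sub>0 'k::comm_ring_1))
    \<Rightarrow> ('a \<Rightarrow>\<^sub>0 'k) \<Rightarrow> ('b \<Rightarrow>\<^sub>0 'k) \<Rightarrow> ('c \<Rightarrow>\<^sub>0 'k)" where
  "bilin m p q = (\<Sum>u\<in>Poly_Mapping.keys p. \<Sum>v\<in>Poly_Mapping.keys q. smul (Poly_Mapping.lookup p u * Poly_Mapping.lookup q v) (m u v))"

definition linext :: "('a \<Rightarrow> ('c \<Rightarrow>\<^sub>0 'k::comm_ring_1)) \<Rightarrow> ('a \<Rightarrow>\<^sub>0 'k) \<Rightarrow> ('c \<Rightarrow>\<^sub>0 'k)" where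
  "linext f p = (\<Sum>s\<in>Poly_Mapping.keys p. smul (Poly_Mapping.lookup p s) (f s))"

text \<open>reduction of the word x^a g^b y^c to the PBW basis:
  x^a g^b y^c = x^(a + w (b div n)) g^(b mod n) y^(c mod n) (1 - x^w)^(c div n)\<close>
definition normalize :: "nat \<Rightarrow> nat \<Rightarrow> word \<Rightarrow> 'k::comm_ring_1 H" where
  "normalize n w abc = (case abc of (a, b, c) \<Rightarrow>
     (\<Sum>j\<le>c div n. Poly_Mapping.single
        (a + int w * int (b div n) + int w * int j, b mod n, c mod n)
        ((-1) ^ j * of_nat ((c div n) choose j))))"

text \<open>(x^a g^b y^c)(x^a' g^b' y^c') = gamma^(c b') x^(a+a') g^(b+b') y^(c+c'), since y g = gamma g y\<close>
definition basis_mult :: "nat \<Rightarrow> nat \<Rightarrow> 'k::comm_ring_1 \<Rightarrow> word \<Rightarrow> word \<Rightarrow> 'k H" where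
  "basis_mult n w \<gamma> s t = (case s of (a, b, c) \<Rightarrow> case t of (a', b', c') \<Rightarrow>
     smul (\<gamma> ^ (c * b')) (normalize n w (a + a', b + b', c + c')))"

definition hmul :: "nat \<Rightarrow> nat \<Rightarrow> 'k::comm_ring_1 \<Rightarrow> 'k H \<Rightarrow> 'k H \<Rightarrow> 'k H" where
  "hmul n w \<gamma> = bilin (basis_mult n w \<gamma>)"

definition tens :: "'k::comm_ring_1 H \<Rightarrow> 'k H \<Rightarrow> 'k HH" where
  "tens = bilin (\<lambda>s t. Poly_Mapping.single (s, t) 1)"

definition tmul :: "nat \<Rightarrow> nat \<Rightarrow> 'k::comm_ring_1 \<Rightarrow> 'k HH \<Rightarrow> 'k HH \<Rightarrow> 'k HH" where
  "tmul n w \<gamma> = bilin (\<lambda>st st'. tens (basis_mult n w \<gamma> (fst st) (fst st'))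
                                     (basis_mult n w \<gamma> (snd st) (snd st')))"

definition Hone :: "'k::comm_ring_1 H" where "Hone = Poly_Mapping.single (0, 0, 0) 1"
definition Hg :: "'k::comm_ring_1 H" where "Hg = Poly_Mapping.single (0, 1, 0) 1"
definition Hy :: "'k::comm_ring_1 H" where "Hy = Poly_Mapping.single (0, 0, 1) 1"

text \<open>the element x^r g^i for r, i integers (g^n = x^w, so g^i = x^(w (i div n)) g^(i mod n))\<close>
definition xg :: "nat \<Rightarrow> nat \<Rightarrow> int \<Rightarrow> int \<Rightarrow> 'k::comm_ring_1 H" where
  "xg n w r i = Poly_Mapping.single (r + int w * (i div int n), nat (i mod int n), 0) 1"

text \<open>antipode on generators: S(g) = g^(-1), S(y) = - y g^(-1)\<close>
definition Sg :: "nat \<Rightarrow> nat \<Rightarrow> 'k::comm_ring_1 H" where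
  "Sg n w = xg n w 0 (-1)"
definition Sy :: "nat \<Rightarrow> nat \<Rightarrow> 'k::comm_ring_1 \<Rightarrow> 'k H" where
  "Sy n w \<gamma> = - hmul n w \<gamma> Hy (Sg n w)"

definition Delta_y :: "'k::comm_ring_1 HH" where
  "Delta_y = tens Hy Hg + tens Hone Hy"
definition Delta_basis :: "nat \<Rightarrow> nat \<Rightarrow> 'k::comm_ring_1 \<Rightarrow> word \<Rightarrow> 'k HH" where
  "Delta_basis n w \<gamma> s = (case s of (a, b, c) \<Rightarrow>
     tmul n w \<gamma> (Poly_Mapping.single ((a, b, 0), (a, b, 0)) 1)
       ((tmul n w \<gamma> Delta_y ^^ c) (tens Hone Hone)))"
definition Delta :: "nat \<Rightarrow> nat \<Rightarrow> 'k::comm_ring_1 \<Rightarrow> 'k H \<Rightarrow> 'k HH" where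
  "Delta n w \<gamma> = linext (Delta_basis n w \<gamma>)"

definition eps :: "'k::comm_ring_1 H \<Rightarrow> 'k" where
  "eps p = (\<Sum>s\<in>Poly_Mapping.keys p. Poly_Mapping.lookup p s * (if snd (snd s) = 0 then 1 else 0))"

fun cmat :: "nat \<Rightarrow> nat \<Rightarrow> 'k::field \<Rightarrow> 'k \<Rightarrow> int \<Rightarrow> int \<Rightarrow> nat \<Rightarrow> nat \<Rightarrow> 'k H" where
  "cmat n w \<gamma> \<beta> r i 0 l = (if l = 0 then xg n w r i else 0)"
| "cmat n w \<gamma> \<beta> r i (Suc k) l =
     (let C = cmat n w \<gamma> \<beta> r i k; mul = hmul n w \<gamma> in
      if l = 0 then mul (C 0) (Sy n w \<gamma>) + smul \<beta> (mul (mul Hy (C 0)) (Sg n w))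
      else if l < Suc k then mul (C l) (Sy n w \<gamma>)
             + smul (\<beta> * inverse (\<gamma> ^ l)) (mul (mul Hy (C l)) (Sg n w))
             + mul (C (l - 1)) (Sg n w)
      else if l = Suc k then mul (C k) (Sg n w)
      else 0)"

definition Amat :: "nat \<Rightarrow> nat \<Rightarrow> 'k::field \<Rightarrow> 'k \<Rightarrow> int \<Rightarrow> int \<Rightarrow> nat \<Rightarrow> nat \<Rightarrow> nat \<Rightarrow> 'k H" where
  "Amat n w \<gamma> \<beta> r i m k l = (if l \<le> k \<and> k \<le> m then cmat n w \<gamma> \<beta> r i k l else 0)"

end

theory Submission
  imports Defs
begin

text \<open>
  \<open>H\<close> is modelled on its PBW basis \<open>x\<^sup>a g\<^sup>b y\<^sup>c\<close>, and \<open>\<Delta>\<close>, \<open>\<epsilon>\<close> are defined on basis words.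
  The heart of the matter is that \<open>\<Delta>\<close> and \<open>\<epsilon>\<close> are multiplicative. Since products of basis words
  are reduced with \<open>g\<^sup>n = x\<^sup>w\<close> and \<open>y\<^sup>n = 1 - x\<^sup>w\<close>, this amounts to \<open>\<Delta>\<close> respecting these relations.
  For the second one, \<open>\<Delta>(y) = y \<otimes> g + 1 \<otimes> y\<close> is a sum of two \<open>\<gamma>\<close>-commuting terms, so by the
  q-binomial theorem \<open>\<Delta>(y)\<^sup>n = y\<^sup>n \<otimes> g\<^sup>n + 1 \<otimes> y\<^sup>n\<close>: the Gaussian binomials \<open>[n, j]\<^sub>\<gamma>\<close>
  vanish for \<open>0 < j < n\<close> because \<open>\<gamma>\<close> is a primitive \<open>n\<close>-th root of unity.

  The comatrix identity then follows by induction on \<open>k\<close> from the recursion for \<open>c(k + 1, l)\<close>,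
  using \<open>\<Delta>(S g) = S g \<otimes> S g\<close>, \<open>\<Delta>(S y) = S y \<otimes> 1 + S g \<otimes> S y\<close> and
  \<open>g c(p, l) g\<^sup>-\<^sup>1 = \<gamma>\<^sup>l\<^sup>-\<^sup>p c(p, l)\<close>.
\<close>

section \<open>Finitely supported coefficient functions\<close>

lemma lookup_smul [simp]: "Poly_Mapping.lookup (smul c p) s = c * Poly_Mapping.lookup p s"
  unfolding smul_def by (simp add: Poly_Mapping.map.rep_eq when_def)

lemma smul_add_right [simp]: "smul c (p + q) = smul c p + smul c q"
  by (rule poly_mapping_eqI) (simp add: lookup_add algebra_simps)

lemma smul_add_left: "smul (a + b) p = smul a p + smul b p"
  by (rule poly_mapping_eqI) (simp add: lookup_add algebra_simps)

lemma smul_smul [simp]: "smul a (smul b p) = smul (a * b) p"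
  by (rule poly_mapping_eqI) (simp add: algebra_simps)

lemma smul_one [simp]: "smul 1 p = p"
  by (rule poly_mapping_eqI) simp

lemma smul_zero_left [simp]: "smul 0 p = 0"
  by (rule poly_mapping_eqI) simp

lemma smul_zero_right [simp]: "smul c 0 = 0"
  by (rule poly_mapping_eqI) simp

lemma smul_minus_right [simp]: "smul c (- p) = - smul c p"
  by (rule poly_mapping_eqI) simp

lemma smul_diff_right [simp]: "smul c (p - q) = smul c p - smul c q"
  by (rule poly_mapping_eqI) (simp add: lookup_minus algebra_simps)

lemma smul_sum_right: "smul c (sum f A) = (\<Sum>a\<in>A. smul c (f a))"
  by (rule poly_mapping_eqI) (simp add: lookup_sum sum_distrib_left)

lemma smul_single [simp]: "smul c (Poly_Mapping.single s a) = Poly_Mapping.single s (c * a)"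
  by (rule poly_mapping_eqI) (simp add: lookup_single when_def)

lemma poly_mapping_sum_single:
  "p = (\<Sum>s\<in>Poly_Mapping.keys p. Poly_Mapping.single s (Poly_Mapping.lookup p s))"
  by (rule poly_mapping_eqI) (auto simp: lookup_sum lookup_single when_def in_keys_iff)

lemma poly_mapping_span_induct [case_names basis smul add]:
  fixes P :: "('b \<Rightarrow>\<^sub>0 'k::comm_ring_1) \<Rightarrow> bool"
  assumes basis: "\<And>s. P (Poly_Mapping.single s 1)"
    and smul: "\<And>c p. P p \<Longrightarrow> P (smul c p)"
    and add: "\<And>p q. P p \<Longrightarrow> P q \<Longrightarrow> P (p + q)"
  shows "P p"
proof -
  have single: "P (Poly_Mapping.single s c)" for s c
    using smul[OF basis, of c s] by simp
  have "P (\<Sum>s\<in>A. Poly_Mapping.single s (Poly_Mapping.lookup p s))" if "finite A" for A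
    using that
  proof (induction A rule: finite_induct)
    case empty
    show ?case using single[of undefined 0] by simp
  next
    case (insert s A)
    then show ?case by (simp add: add single)
  qed
  then show ?thesis
    by (metis finite_keys poly_mapping_sum_single)
qed

lemma linext_superset:
  assumes "finite S" "Poly_Mapping.keys p \<subseteq> S"
  shows "linext f p = (\<Sum>s\<in>S. smul (Poly_Mapping.lookup p s) (f s))"
  unfolding linext_def
  by (rule sum.mono_neutral_left) (use assms in \<open>auto simp: in_keys_iff\<close>)

lemma linext_add [simp]: "linext f (p + q) = linext f p + linext f q"
proof -
  let ?S = "Poly_Mapping.keys p \<union> Poly_Mapping.keys q \<union> Poly_Mapping.keys (p + q)"
  have "linext f (p + q) = (\<Sum>s\<in>?S. smul (Poly_Mapping.lookup (p + q) s) (f s))"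
    by (rule linext_superset) auto
  also have "\<dots> = (\<Sum>s\<in>?S. smul (Poly_Mapping.lookup p s) (f s))
      + (\<Sum>s\<in>?S. smul (Poly_Mapping.lookup q s) (f s))"
    by (simp add: lookup_add smul_add_left sum.distrib)
  also have "\<dots> = linext f p + linext f q"
    by (subst (1 2) linext_superset[symmetric]) auto
  finally show ?thesis .
qed

lemma linext_zero [simp]: "linext f 0 = 0"
  by (simp add: linext_def)

lemma linext_single [simp]: "linext f (Poly_Mapping.single s c) = smul c (f s)"
  by (cases "c = 0") (simp_all add: linext_def)

lemma linext_smul [simp]: "linext f (smul c p) = smul c (linext f p)"
proof -
  have "linext f (smul c p)
      = (\<Sum>s\<in>Poly_Mapping.keys p. smul (Poly_Mapping.lookup (smul c p) s) (f s))"
    by (rule linext_superset) (auto simp: in_keys_iff)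
  then show ?thesis by (simp add: linext_def smul_sum_right)
qed

lemma linext_minus [simp]: "linext f (- p) = - linext f p"
  using linext_add[of f p "- p"] by (simp add: eq_neg_iff_add_eq_0 add.commute)

lemma linext_diff [simp]: "linext f (p - q) = linext f p - linext f q"
  using linext_add[of f p "- q"] by simp

lemma linext_sum [simp]: "linext f (sum g A) = (\<Sum>a\<in>A. linext f (g a))"
  by (induction A rule: infinite_finite_induct) auto

lemma linext_fun_zero [simp]: "linext (\<lambda>s. 0) p = 0"
  by (simp add: linext_def)

lemma linext_fun_add: "linext (\<lambda>s. f s + g s) p = linext f p + linext g p"
  by (simp add: linext_def sum.distrib)

lemma linext_fun_smul: "linext (\<lambda>s. smul c (f s)) p = smul c (linext f p)"
  by (simp add: linext_def smul_sum_right mult.commute)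

lemma linext_linext: "linext g (linext f p) = linext (\<lambda>s. linext g (f s)) p"
  by (simp add: linext_def[of f p] linext_def[of "\<lambda>s. linext g (f s)" p])

lemma bilin_eq_linext: "bilin m p q = linext (\<lambda>u. linext (m u) q) p"
  by (simp add: bilin_def linext_def smul_sum_right mult.commute)

lemma bilin_add_left [simp]: "bilin m (p + p') q = bilin m p q + bilin m p' q"
  by (simp add: bilin_eq_linext)

lemma bilin_add_right [simp]: "bilin m p (q + q') = bilin m p q + bilin m p q'"
  by (simp add: bilin_eq_linext linext_fun_add)

lemma bilin_smul_left [simp]: "bilin m (smul c p) q = smul c (bilin m p q)"
  by (simp add: bilin_eq_linext)

lemma bilin_smul_right [simp]: "bilin m p (smul c q) = smul c (bilin m p q)"
  by (simp add: bilin_eq_linext linext_fun_smul)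

lemma bilin_zero_left [simp]: "bilin m 0 q = 0"
  by (simp add: bilin_eq_linext)

lemma bilin_zero_right [simp]: "bilin m p 0 = 0"
  by (simp add: bilin_eq_linext)

lemma bilin_minus_left [simp]: "bilin m (- p) q = - bilin m p q"
  by (simp add: bilin_eq_linext)

lemma bilin_minus_right [simp]: "bilin m p (- q) = - bilin m p q"
  using bilin_add_right[of m p q "- q"] by (simp add: eq_neg_iff_add_eq_0 add.commute)

lemma bilin_diff_left [simp]: "bilin m (p - p') q = bilin m p q - bilin m p' q"
  by (simp add: bilin_eq_linext)

lemma bilin_diff_right [simp]: "bilin m p (q - q') = bilin m p q - bilin m p q'"
  using bilin_add_right[of m p q "- q'"] by simp

lemma bilin_sum_left: "bilin m (sum f A) q = (\<Sum>a\<in>A. bilin m (f a) q)"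
  by (simp add: bilin_eq_linext)

lemma bilin_sum_right: "bilin m p (sum f A) = (\<Sum>a\<in>A. bilin m p (f a))"
  by (induction A rule: infinite_finite_induct) auto

lemma bilin_single [simp]:
  "bilin m (Poly_Mapping.single s a) (Poly_Mapping.single t b) = smul (a * b) (m s t)"
  by (simp add: bilin_eq_linext)

section \<open>Alternating binomial sums\<close>

lemma alternating_binomial_Suc:
  fixes f :: "nat \<Rightarrow> 'a::comm_ring_1"
  shows "(\<Sum>j\<le>Suc N. (-1)^j * of_nat (Suc N choose j) * f j)
       = (\<Sum>j\<le>N. (-1)^j * of_nat (N choose j) * f j)
         - (\<Sum>j\<le>N. (-1)^j * of_nat (N choose j) * f (Suc j))"
proof -
  define h where "h j = (-1)^j * of_nat (N choose j) * f j" for j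
  have shift: "(\<Sum>j\<le>N. h j) = h 0 + (\<Sum>j\<le>N. h (Suc j))"
  proof -
    have "h (Suc N) = 0" by (simp add: h_def binomial_eq_0)
    then have "(\<Sum>j\<le>N. h j) = (\<Sum>j\<le>Suc N. h j)" by simp
    also have "\<dots> = h 0 + (\<Sum>j\<le>N. h (Suc j))" by (rule sum.atMost_Suc_shift)
    finally show ?thesis .
  qed
  have pascal: "(-1)^(Suc j) * of_nat (Suc N choose Suc j) * f (Suc j)
      = h (Suc j) - (-1)^j * of_nat (N choose j) * f (Suc j)" for j
    by (simp add: h_def algebra_simps)
  have "(\<Sum>j\<le>Suc N. (-1)^j * of_nat (Suc N choose j) * f j)
      = f 0 + (\<Sum>j\<le>N. (-1)^(Suc j) * of_nat (Suc N choose Suc j) * f (Suc j))"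
    by (subst sum.atMost_Suc_shift) simp
  also have "\<dots> = f 0 + (\<Sum>j\<le>N. h (Suc j)) - (\<Sum>j\<le>N. (-1)^j * of_nat (N choose j) * f (Suc j))"
    by (simp only: pascal sum_subtractf add_diff_eq)
  finally show ?thesis
    using shift by (simp add: h_def)
qed

lemma alternating_binomial_convolution:
  fixes f :: "nat \<Rightarrow> 'a::comm_ring_1"
  shows "(\<Sum>j\<le>A. (-1)^j * of_nat (A choose j)
            * (\<Sum>j'\<le>B. (-1)^j' * of_nat (B choose j') * f (j + j')))
       = (\<Sum>j\<le>A + B. (-1)^j * of_nat ((A + B) choose j) * f j)"
proof (induction A arbitrary: f)
  case 0
  then show ?case by simp
next
  case (Suc A)
  have "(\<Sum>j\<le>Suc A. (-1)^j * of_nat (Suc A choose j)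
          * (\<Sum>j'\<le>B. (-1)^j' * of_nat (B choose j') * f (j + j')))
     = (\<Sum>j\<le>A + B. (-1)^j * of_nat ((A + B) choose j) * f j)
       - (\<Sum>j\<le>A + B. (-1)^j * of_nat ((A + B) choose j) * f (Suc j))"
    using Suc.IH[of f] Suc.IH[of "\<lambda>j. f (Suc j)"]
    by (simp only: alternating_binomial_Suc) simp
  also have "\<dots> = (\<Sum>j\<le>Suc A + B. (-1)^j * of_nat ((Suc A + B) choose j) * f j)"
    using alternating_binomial_Suc[of "A + B" f] by simp
  finally show ?case .
qed

lemma alternating_binomial_Suc_smul:
  fixes F :: "nat \<Rightarrow> ('b \<Rightarrow>\<^sub>0 'a::comm_ring_1)"
  shows "(\<Sum>j\<le>Suc N. smul ((-1)^j * of_nat (Suc N choose j)) (F j))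
       = (\<Sum>j\<le>N. smul ((-1)^j * of_nat (N choose j)) (F j))
         - (\<Sum>j\<le>N. smul ((-1)^j * of_nat (N choose j)) (F (Suc j)))"
  by (rule poly_mapping_eqI, simp only: lookup_sum lookup_minus lookup_smul,
      rule alternating_binomial_Suc)

section \<open>The algebra \<open>H\<close>\<close>

text \<open>\<open>xbinom w a b c q\<close> is \<open>x\<^sup>a (1 - x\<^sup>w)\<^sup>q g\<^sup>b y\<^sup>c\<close>, expanded in the basis.\<close>
definition xbinom :: "nat \<Rightarrow> int \<Rightarrow> nat \<Rightarrow> nat \<Rightarrow> nat \<Rightarrow> 'k::comm_ring_1 H" where
  "xbinom w a b c q =
     (\<Sum>j\<le>q. Poly_Mapping.single (a + int w * int j, b, c) ((-1)^j * of_nat (q choose j)))"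

lemma normalize_eq_xbinom:
  "normalize n w (a, b, c) = xbinom w (a + int w * int (b div n)) (b mod n) (c mod n) (c div n)"
  by (simp add: normalize_def xbinom_def)

lemma lookup_xbinom:
  "Poly_Mapping.lookup (xbinom w a b c q) (x, y, z) =
     (if y = b \<and> z = c
      then (\<Sum>j\<le>q. (-1)^j * of_nat (q choose j) * (if x = a + int w * int j then 1 else 0))
      else 0)"
  by (auto simp: xbinom_def lookup_sum lookup_single when_def intro!: sum.cong)

lemma linext_xbinom:
  "linext f (xbinom w a b c q)
     = (\<Sum>j\<le>q. smul ((-1)^j * of_nat (q choose j)) (f (a + int w * int j, b, c)))"
  by (simp add: xbinom_def)

lemma xbinom_convolution:
  "(\<Sum>j\<le>q. smul ((-1)^j * of_nat (q choose j)) (xbinom w (a + int w * int j) b c q'))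
     = xbinom w a b c (q + q')"
proof (rule poly_mapping_eqI)
  fix v :: word
  obtain x y z where v: "v = (x, y, z)" by (cases v)
  define f :: "nat \<Rightarrow> 'a" where "f j = (if x = a + int w * int j then 1 else 0)" for j
  have shift: "(if x = a + int w * int j + int w * int j' then 1 else 0) = f (j + j')" for j j'
    by (simp add: f_def algebra_simps)
  have "Poly_Mapping.lookup
          (\<Sum>j\<le>q. smul ((-1)^j * of_nat (q choose j)) (xbinom w (a + int w * int j) b c q')) v
      = (if y = b \<and> z = c then (\<Sum>j\<le>q. (-1)^j * of_nat (q choose j)
          * (\<Sum>j'\<le>q'. (-1)^j' * of_nat (q' choose j') * f (j + j'))) else 0)"
    unfolding v lookup_sum lookup_smul lookup_xbinom shift by (cases "y = b"; cases "z = c") simp_all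
  also have "\<dots> = Poly_Mapping.lookup (xbinom w a b c (q + q')) v"
    unfolding v lookup_xbinom alternating_binomial_convolution by (simp add: f_def)
  finally show "Poly_Mapping.lookup
          (\<Sum>j\<le>q. smul ((-1)^j * of_nat (q choose j)) (xbinom w (a + int w * int j) b c q')) v
      = Poly_Mapping.lookup (xbinom w a b c (q + q') :: 'a H) v" .
qed

lemma add_div_eq: "(n::nat) > 0 \<Longrightarrow> (m + k) div n = m div n + (m mod n + k) div n"
proof -
  assume n: "n > 0"
  have "m + k = (m mod n + k) + n * (m div n)"
    using div_mult_mod_eq[of m n] by (simp add: algebra_simps)
  then show ?thesis
    using n by (metis add.commute div_mult_self2 not_gr0)
qed

locale B_algebra =
  fixes n w :: nat and \<gamma> :: "'k::field"
  assumes n_pos: "n > 0" and gamma_pow_n: "\<gamma> ^ n = 1"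
    and gamma_primitive: "\<forall>j. 0 < j \<and> j < n \<longrightarrow> \<gamma> ^ j \<noteq> 1"
begin

abbreviation Hmult :: "'k H \<Rightarrow> 'k H \<Rightarrow> 'k H" (infixl \<open>\<cdot>\<close> 70)
  where "p \<cdot> q \<equiv> hmul n w \<gamma> p q"

abbreviation word_nf :: "word \<Rightarrow> 'k H" where "word_nf \<equiv> normalize n w"

abbreviation wmult :: "word \<Rightarrow> word \<Rightarrow> 'k H" where "wmult \<equiv> basis_mult n w \<gamma>"

definition nf :: "'k H \<Rightarrow> 'k H" where "nf = linext word_nf"

lemma gamma_pow_mod: "\<gamma> ^ k = \<gamma> ^ (k mod n)"
proof -
  have "\<gamma> ^ k = \<gamma> ^ (n * (k div n) + k mod n)" by simp
  also have "\<dots> = (\<gamma> ^ n) ^ (k div n) * \<gamma> ^ (k mod n)" by (simp only: power_add power_mult)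
  finally show ?thesis by (simp add: gamma_pow_n)
qed

lemma gamma_pow_mult_mod: "\<gamma> ^ (c * b) = \<gamma> ^ ((c mod n) * b)"
  by (subst (1 2) gamma_pow_mod) (simp add: mod_mult_left_eq)

lemma gamma_pow_mult_mod': "\<gamma> ^ (c * b) = \<gamma> ^ (c * (b mod n))"
  using gamma_pow_mult_mod[of b c] by (simp add: mult.commute)

lemma wmult_eq: "wmult (a, b, c) (a', b', c') = smul (\<gamma> ^ (c * b')) (word_nf (a + a', b + b', c + c'))"
  by (simp add: basis_mult_def)

lemma word_nf_reduced: "b < n \<Longrightarrow> c < n \<Longrightarrow> word_nf (a, b, c) = Poly_Mapping.single (a, b, c) 1"
  by (simp add: normalize_def)

lemma word_nf_c0: "word_nf (a, b, 0) = Poly_Mapping.single (a + int w * int (b div n), b mod n, 0) 1"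
  using n_pos by (simp add: normalize_def)

text \<open>Multiplying by a fixed word commutes with reducing to the basis, as long as the scalar
  factor only depends on the residues of the exponents of g and y modulo n.\<close>
lemma linext_shift_word_nf:
  "linext (\<lambda>(x, y, z). smul (\<phi> z y) (word_nf (x + a', y + b', z + c'))) (word_nf (a, b, c))
   = smul (\<phi> (c mod n) (b mod n)) (word_nf (a + a', b + b', c + c'))"
proof -
  define a1 where "a1 = a + int w * int (b div n)"
  define b1 where "b1 = b mod n"
  define c1 where "c1 = c mod n"
  define q where "q = c div n"
  define a2 where "a2 = a1 + a' + int w * int ((b1 + b') div n)"
  define X :: "nat \<Rightarrow> 'k H" where "X j = xbinom w (a2 + int w * int j) ((b1 + b') mod n) ((c1 + c') mod n)
                          ((c1 + c') div n)" for j
  have shifted: "word_nf (a1 + int w * int j + a', b1 + b', c1 + c') = X j" for j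
    by (simp add: normalize_eq_xbinom X_def a2_def algebra_simps)
  have merged: "xbinom w a2 ((b1 + b') mod n) ((c1 + c') mod n) (q + (c1 + c') div n)
      = word_nf (a + a', b + b', c + c')"
  proof -
    have "(b + b') div n = b div n + (b1 + b') div n" "(c + c') div n = q + (c1 + c') div n"
      using add_div_eq[OF n_pos, of b b'] add_div_eq[OF n_pos, of c c']
      unfolding b1_def c1_def q_def by simp_all
    moreover have "(b + b') mod n = (b1 + b') mod n" "(c + c') mod n = (c1 + c') mod n"
      by (simp_all add: b1_def c1_def mod_add_left_eq)
    ultimately show ?thesis
      by (simp add: normalize_eq_xbinom a2_def a1_def algebra_simps)
  qed
  have "linext (\<lambda>(x, y, z). smul (\<phi> z y) (word_nf (x + a', y + b', z + c'))) (word_nf (a, b, c))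
      = (\<Sum>j\<le>q. smul ((-1)^j * of_nat (q choose j))
                 (smul (\<phi> c1 b1) (word_nf (a1 + int w * int j + a', b1 + b', c1 + c'))))"
    by (simp add: normalize_eq_xbinom linext_xbinom a1_def b1_def c1_def q_def)
  also have "\<dots> = smul (\<phi> c1 b1) (\<Sum>j\<le>q. smul ((-1)^j * of_nat (q choose j)) (X j))"
    by (simp only: shifted) (simp add: smul_sum_right mult.commute)
  also have "\<dots> = smul (\<phi> c1 b1) (word_nf (a + a', b + b', c + c'))"
    by (simp add: X_def xbinom_convolution merged)
  finally show ?thesis by (simp add: b1_def c1_def)
qed

lemma Hmult_single: "Poly_Mapping.single s a \<cdot> Poly_Mapping.single t b = smul (a * b) (wmult s t)"
  by (simp add: hmul_def)

lemma Hmult_single_left: "Poly_Mapping.single s 1 \<cdot> q = linext (wmult s) q"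
  by (simp add: hmul_def bilin_eq_linext)

lemma Hmult_single_right: "p \<cdot> Poly_Mapping.single t 1 = linext (\<lambda>s. wmult s t) p"
  by (simp add: hmul_def bilin_eq_linext)

lemma Hmult_add_left [simp]: "(p + p') \<cdot> q = p \<cdot> q + p' \<cdot> q" by (simp add: hmul_def)
lemma Hmult_add_right [simp]: "p \<cdot> (q + q') = p \<cdot> q + p \<cdot> q'" by (simp add: hmul_def)
lemma Hmult_smul_left [simp]: "smul c p \<cdot> q = smul c (p \<cdot> q)" by (simp add: hmul_def)
lemma Hmult_smul_right [simp]: "p \<cdot> smul c q = smul c (p \<cdot> q)" by (simp add: hmul_def)
lemma Hmult_zero_left [simp]: "0 \<cdot> q = 0" by (simp add: hmul_def)
lemma Hmult_zero_right [simp]: "p \<cdot> 0 = 0" by (simp add: hmul_def)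
lemma Hmult_minus_left [simp]: "(- p) \<cdot> q = - (p \<cdot> q)" by (simp add: hmul_def)
lemma Hmult_minus_right [simp]: "p \<cdot> (- q) = - (p \<cdot> q)" by (simp add: hmul_def)

lemma Hmult_word_nf_single: "word_nf v \<cdot> Poly_Mapping.single t 1 = wmult v t"
proof -
  obtain a b c where v: "v = (a, b, c)" by (cases v)
  obtain a' b' c' where t: "t = (a', b', c')" by (cases t)
  have "(\<lambda>s. wmult s t) = (\<lambda>(x, y, z). smul (\<gamma> ^ (z * b')) (word_nf (x + a', y + b', z + c')))"
    by (auto simp: t wmult_eq)
  then show ?thesis
    using linext_shift_word_nf[of "\<lambda>z y. \<gamma> ^ (z * b')"] gamma_pow_mult_mod[of c b']
    by (simp add: Hmult_single_right v t wmult_eq)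
qed

lemma Hmult_single_word_nf: "Poly_Mapping.single t 1 \<cdot> word_nf v = wmult t v"
proof -
  obtain a b c where v: "v = (a, b, c)" by (cases v)
  obtain a' b' c' where t: "t = (a', b', c')" by (cases t)
  have "wmult t = (\<lambda>(x, y, z). smul (\<gamma> ^ (c' * y)) (word_nf (x + a', y + b', z + c')))"
    by (auto simp: t wmult_eq algebra_simps)
  then show ?thesis
    using linext_shift_word_nf[of "\<lambda>z y. \<gamma> ^ (c' * y)" a' b' c' a b c] gamma_pow_mult_mod'[of c' b]
    by (simp add: Hmult_single_left v t wmult_eq algebra_simps)
qed

lemma Hmult_assoc_words:
  "Poly_Mapping.single s 1 \<cdot> Poly_Mapping.single t 1 \<cdot> Poly_Mapping.single u 1
   = Poly_Mapping.single s 1 \<cdot> (Poly_Mapping.single t 1 \<cdot> Poly_Mapping.single u 1)"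
proof -
  obtain a b c where s: "s = (a, b, c)" by (cases s)
  obtain a' b' c' where t: "t = (a', b', c')" by (cases t)
  obtain a'' b'' c'' where u: "u = (a'', b'', c'')" by (cases u)
  have "Poly_Mapping.single s 1 \<cdot> Poly_Mapping.single t 1 \<cdot> Poly_Mapping.single u 1
      = smul (\<gamma> ^ (c * b') * \<gamma> ^ ((c + c') * b'')) (word_nf (a + a' + a'', b + b' + b'', c + c' + c''))"
    by (simp add: Hmult_single s t u wmult_eq Hmult_word_nf_single)
  also have "\<dots> = smul (\<gamma> ^ (c' * b'') * \<gamma> ^ (c * (b' + b'')))
                    (word_nf (a + (a' + a''), b + (b' + b''), c + (c' + c'')))"
    by (simp add: algebra_simps power_add)
  also have "\<dots> = Poly_Mapping.single s 1 \<cdot> (Poly_Mapping.single t 1 \<cdot> Poly_Mapping.single u 1)"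
    by (simp add: Hmult_single s t u wmult_eq Hmult_single_word_nf)
  finally show ?thesis .
qed

lemma Hmult_assoc: "p \<cdot> q \<cdot> r = p \<cdot> (q \<cdot> r)"
proof (induction p rule: poly_mapping_span_induct)
  case basis
  show ?case
  proof (induction q rule: poly_mapping_span_induct)
    case basis
    show ?case
      by (induction r rule: poly_mapping_span_induct) (simp_all add: Hmult_assoc_words)
  qed simp_all
qed simp_all

lemma Hone_Hmult: "Hone \<cdot> p = nf p"
proof -
  have "wmult (0, 0, 0) = word_nf" by (auto simp: wmult_eq)
  then show ?thesis by (simp add: Hone_def Hmult_single_left nf_def)
qed

lemma Hmult_Hone: "p \<cdot> Hone = nf p"
proof -
  have "(\<lambda>s. wmult s (0, 0, 0)) = word_nf" by (auto simp: wmult_eq)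
  then show ?thesis by (simp add: Hone_def Hmult_single_right nf_def)
qed

lemma nf_word_nf: "nf (word_nf v) = word_nf v"
proof -
  obtain a b c where v: "v = (a, b, c)" by (cases v)
  have "nf (word_nf v) = (\<Sum>j\<le>c div n. smul ((-1)^j * of_nat ((c div n) choose j))
        (word_nf (a + int w * int (b div n) + int w * int j, b mod n, c mod n)))"
    by (simp add: nf_def v normalize_eq_xbinom linext_xbinom)
  also have "\<dots> = word_nf v"
    using n_pos by (simp add: word_nf_reduced v normalize_eq_xbinom xbinom_def)
  finally show ?thesis .
qed

lemma nf_wmult: "nf (wmult s t) = wmult s t"
  by (cases s; cases t) (simp add: wmult_eq nf_def nf_word_nf[unfolded nf_def])

lemma nf_Hmult: "nf (p \<cdot> q) = p \<cdot> q"
  by (simp add: hmul_def bilin_eq_linext nf_def linext_linext nf_wmult[unfolded nf_def])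

lemma Hmult_nf_left: "nf p \<cdot> q = p \<cdot> q"
  by (metis Hmult_assoc Hone_Hmult nf_Hmult)

lemma Hmult_nf_right: "p \<cdot> nf q = p \<cdot> q"
  by (metis Hmult_assoc Hmult_Hone nf_Hmult)

lemma nf_zero [simp]: "nf 0 = 0" by (simp add: nf_def)
lemma nf_add [simp]: "nf (p + q) = nf p + nf q" by (simp add: nf_def)
lemma nf_smul [simp]: "nf (smul c p) = smul c (nf p)" by (simp add: nf_def)
lemma nf_single: "nf (Poly_Mapping.single s c) = smul c (word_nf s)" by (simp add: nf_def)

end

section \<open>The algebra \<open>H \<otimes> H\<close>\<close>

notation tens (infix \<open>\<otimes>\<close> 68)

lemma tens_single:
  "Poly_Mapping.single s a \<otimes> Poly_Mapping.single t b = Poly_Mapping.single (s, t) (a * b)"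
  by (simp add: tens_def)

lemma tens_add_left [simp]: "(p + p') \<otimes> q = p \<otimes> q + p' \<otimes> q" by (simp add: tens_def)
lemma tens_add_right [simp]: "p \<otimes> (q + q') = p \<otimes> q + p \<otimes> q'" by (simp add: tens_def)
lemma tens_smul_left [simp]: "smul c p \<otimes> q = smul c (p \<otimes> q)" by (simp add: tens_def)
lemma tens_smul_right [simp]: "p \<otimes> smul c q = smul c (p \<otimes> q)" by (simp add: tens_def)
lemma tens_zero_left [simp]: "0 \<otimes> q = 0" by (simp add: tens_def)
lemma tens_zero_right [simp]: "p \<otimes> 0 = 0" by (simp add: tens_def)
lemma tens_minus_left [simp]: "(- p) \<otimes> q = - (p \<otimes> q)" by (simp add: tens_def)
lemma tens_minus_right [simp]: "p \<otimes> (- q) = - (p \<otimes> q)" by (simp add: tens_def)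
lemma tens_diff_left [simp]: "(p - p') \<otimes> q = p \<otimes> q - p' \<otimes> q" by (simp add: tens_def)
lemma tens_diff_right [simp]: "p \<otimes> (q - q') = p \<otimes> q - p \<otimes> q'" by (simp add: tens_def)

lemma single_eq_tens:
  "Poly_Mapping.single (k :: word \<times> word) (1 :: 'k::comm_ring_1)
   = Poly_Mapping.single (fst k) 1 \<otimes> Poly_Mapping.single (snd k) 1"
  by (simp add: tens_single)

context B_algebra
begin

abbreviation Tmult :: "'k HH \<Rightarrow> 'k HH \<Rightarrow> 'k HH" (infixl \<open>\<odot>\<close> 66)
  where "X \<odot> Y \<equiv> tmul n w \<gamma> X Y"

lemma Tmult_add_left [simp]: "(X + X') \<odot> Y = X \<odot> Y + X' \<odot> Y" by (simp add: tmul_def)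
lemma Tmult_add_right [simp]: "X \<odot> (Y + Y') = X \<odot> Y + X \<odot> Y'" by (simp add: tmul_def)
lemma Tmult_smul_left [simp]: "smul c X \<odot> Y = smul c (X \<odot> Y)" by (simp add: tmul_def)
lemma Tmult_smul_right [simp]: "X \<odot> smul c Y = smul c (X \<odot> Y)" by (simp add: tmul_def)
lemma Tmult_diff_right [simp]: "X \<odot> (Y - Y') = X \<odot> Y - X \<odot> Y'" by (simp add: tmul_def)
lemma Tmult_sum_left: "sum f A \<odot> Y = (\<Sum>a\<in>A. f a \<odot> Y)" by (simp add: tmul_def bilin_sum_left)
lemma Tmult_sum_right: "X \<odot> sum f A = (\<Sum>a\<in>A. X \<odot> f a)" by (simp add: tmul_def bilin_sum_right)

lemma Tmult_single:
  "Poly_Mapping.single (s, t) a \<odot> Poly_Mapping.single (s', t') b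
   = smul (a * b) (wmult s s' \<otimes> wmult t t')"
  by (simp add: tmul_def)

lemma Tmult_tens: "a \<otimes> b \<odot> c \<otimes> d = a \<cdot> c \<otimes> b \<cdot> d"
proof (induction a rule: poly_mapping_span_induct)
  case basis
  show ?case
  proof (induction b rule: poly_mapping_span_induct)
    case basis
    show ?case
    proof (induction c rule: poly_mapping_span_induct)
      case basis
      show ?case
        by (induction d rule: poly_mapping_span_induct)
          (simp_all add: tens_single Tmult_single Hmult_single)
    qed simp_all
  qed simp_all
qed simp_all

lemma Tmult_assoc_basis:
  "Poly_Mapping.single k 1 \<odot> Poly_Mapping.single k' 1 \<odot> Poly_Mapping.single k'' 1
   = Poly_Mapping.single k 1 \<odot> (Poly_Mapping.single k' 1 \<odot> Poly_Mapping.single k'' 1)"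
  by (simp only: single_eq_tens Tmult_tens Hmult_assoc)

lemma Tmult_assoc: "X \<odot> Y \<odot> Z = X \<odot> (Y \<odot> Z)"
proof (induction X rule: poly_mapping_span_induct)
  case basis
  show ?case
  proof (induction Y rule: poly_mapping_span_induct)
    case basis
    show ?case
      by (induction Z rule: poly_mapping_span_induct) (simp_all add: Tmult_assoc_basis)
  qed simp_all
qed simp_all

text \<open>The element \<open>1 \<otimes> 1\<close> is a unit only up to reduction of words to the basis:
  multiplying by it applies \<^const>\<open>nf\<close> to both tensor factors.\<close>
abbreviation Tone :: "'k HH" where "Tone \<equiv> Hone \<otimes> Hone"

lemma nf_Hone: "nf Hone = Hone"
  using n_pos by (simp add: Hone_def nf_single word_nf_reduced)

lemma Tone_Tmult_tens: "Tone \<odot> a \<otimes> b = nf a \<otimes> nf b"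
  by (simp add: Tmult_tens Hone_Hmult)

lemma tens_Tmult_Tone: "a \<otimes> b \<odot> Tone = nf a \<otimes> nf b"
  by (simp add: Tmult_tens Hmult_Hone)

lemma nf_tens_Tmult: "nf a \<otimes> nf b \<odot> Y = a \<otimes> b \<odot> Y"
  by (induction Y rule: poly_mapping_span_induct)
    (simp_all add: single_eq_tens Tmult_tens Hmult_nf_left)

lemma Tone_absorb_left: "Tone \<odot> X \<odot> Y = X \<odot> Y"
  by (induction X rule: poly_mapping_span_induct)
    (simp_all add: single_eq_tens Tone_Tmult_tens nf_tens_Tmult)

lemma Tone_absorb_mid: "X \<odot> Tone \<odot> Y = X \<odot> Y"
  by (induction X rule: poly_mapping_span_induct)
    (simp_all add: single_eq_tens tens_Tmult_Tone nf_tens_Tmult)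

lemma Tone_absorb_mid': "X \<odot> (Tone \<odot> Y) = X \<odot> Y"
  by (metis Tmult_assoc Tone_absorb_mid)

lemma Tone_absorb_prod: "Tone \<odot> (X \<odot> Y) = X \<odot> Y"
  by (simp add: Tmult_assoc[symmetric] Tone_absorb_left)

lemma Tone_Tmult_Tone: "Tone \<odot> Tone = Tone"
  by (simp add: Tone_Tmult_tens nf_Hone)

end

section \<open>The comultiplication\<close>

fun qbinom :: "'k::comm_ring_1 \<Rightarrow> nat \<Rightarrow> nat \<Rightarrow> 'k" where
  "qbinom q d 0 = 1"
| "qbinom q 0 (Suc j) = 0"
| "qbinom q (Suc d) (Suc j) = qbinom q d (Suc j) + q ^ (d - j) * qbinom q d j"

lemma qbinom_eq_0: "d < j \<Longrightarrow> qbinom q d j = 0"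
proof (induction d arbitrary: j)
  case 0
  then show ?case by (cases j) auto
next
  case (Suc d)
  then show ?case by (cases j) auto
qed

lemma qbinom_self: "qbinom q d d = 1"
  by (induction d) (simp_all add: qbinom_eq_0)

lemma qbinom_mult_prod:
  "j \<le> d \<Longrightarrow> qbinom q d j * (\<Prod>i\<in>{1..j}. (q ^ i - 1)) = (\<Prod>i<j. (q ^ (d - i) - 1))"
proof (induction d arbitrary: j)
  case 0
  then show ?case by simp
next
  case (Suc d)
  show ?case
  proof (cases j)
    case 0
    then show ?thesis by simp
  next
    case (Suc j')
    have jd: "j' \<le> d" using Suc.prems Suc by simp
    define D where "D = (\<Prod>i\<in>{1..j'}. (q ^ i - 1))"
    define P where "P = (\<Prod>i<j'. (q ^ (d - i) - 1))"
    have D_Suc: "(\<Prod>i\<in>{1..Suc j'}. (q ^ i - 1)) = D * (q ^ Suc j' - 1)"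
      by (simp add: D_def prod.cl_ivl_Suc)
    have IH1: "qbinom q d (Suc j') * (D * (q ^ Suc j' - 1)) = P * (q ^ (d - j') - 1)"
    proof (cases "Suc j' \<le> d")
      case True
      have "qbinom q d (Suc j') * (D * (q ^ Suc j' - 1)) = (\<Prod>i<Suc j'. (q ^ (d - i) - 1))"
        using Suc.IH[OF True] D_Suc by simp
      then show ?thesis by (simp add: P_def)
    next
      case False
      then show ?thesis using jd by (simp add: qbinom_eq_0)
    qed
    have IH2: "qbinom q d j' * D = P"
      using Suc.IH[OF jd] by (simp add: D_def P_def)
    have pow: "q ^ (d - j') * q ^ Suc j' = q ^ Suc d"
      using jd by (simp add: power_add[symmetric] del: power_Suc)
    have "qbinom q (Suc d) j * (\<Prod>i\<in>{1..j}. (q ^ i - 1))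
        = qbinom q d (Suc j') * (D * (q ^ Suc j' - 1))
          + q ^ (d - j') * (qbinom q d j' * D) * (q ^ Suc j' - 1)"
      by (simp only: Suc qbinom.simps D_Suc) (simp add: algebra_simps)
    also have "\<dots> = P * (q ^ Suc d - 1)"
      unfolding IH1 IH2 using pow by (simp add: algebra_simps)
    also have "\<dots> = (\<Prod>i<j. (q ^ (Suc d - i) - 1))"
      by (simp only: Suc P_def prod.lessThan_Suc_shift) (simp add: mult.commute)
    finally show ?thesis .
  qed
qed

context B_algebra
begin

lemma qbinom_gamma_eq_0: "0 < j \<Longrightarrow> j < n \<Longrightarrow> qbinom \<gamma> n j = 0"
proof -
  assume j: "0 < j" "j < n"
  have "qbinom \<gamma> n j * (\<Prod>i\<in>{1..j}. (\<gamma> ^ i - 1)) = (\<Prod>i<j. (\<gamma> ^ (n - i) - 1))"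
    using j by (intro qbinom_mult_prod) simp
  also have "\<dots> = 0"
    using j gamma_pow_n by (auto simp: prod_zero_iff intro!: bexI[where x=0])
  finally show ?thesis
    using j gamma_primitive by (auto simp: prod_zero_iff)
qed

abbreviation xgw :: "int \<Rightarrow> nat \<Rightarrow> 'k H" where "xgw a b \<equiv> Poly_Mapping.single (a, b, 0) 1"

abbreviation grp :: "int \<Rightarrow> nat \<Rightarrow> 'k HH" where "grp a b \<equiv> xgw a b \<otimes> xgw a b"

abbreviation Del :: "'k H \<Rightarrow> 'k HH" where "Del \<equiv> Delta n w \<gamma>"

definition Dy_pow :: "nat \<Rightarrow> 'k HH" where "Dy_pow c = ((\<odot>) Delta_y ^^ c) Tone"

lemma Delta_basis_eq: "Delta_basis n w \<gamma> (a, b, c) = grp a b \<odot> Dy_pow c"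
  by (simp add: Delta_basis_def Dy_pow_def tens_single)

lemma Dy_pow_0: "Dy_pow 0 = Tone"
  by (simp add: Dy_pow_def)

lemma Dy_pow_Suc: "Dy_pow (Suc c) = Delta_y \<odot> Dy_pow c"
  by (simp add: Dy_pow_def)

lemma Dy_pow_Suc_right: "Dy_pow (Suc c) = Dy_pow c \<odot> Delta_y"
proof (induction c)
  case 0
  have "Delta_y \<odot> Tone = Tone \<odot> Delta_y"
    by (simp add: Delta_y_def Tmult_tens Hone_Hmult Hmult_Hone)
  then show ?case by (simp add: Dy_pow_Suc Dy_pow_0)
next
  case (Suc c)
  have "Dy_pow (Suc (Suc c)) = Delta_y \<odot> (Dy_pow c \<odot> Delta_y)"
    using Suc by (simp add: Dy_pow_Suc)
  then show ?case by (simp add: Tmult_assoc Dy_pow_Suc)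
qed

lemma Tone_Tmult_Dy_pow: "Tone \<odot> Dy_pow c = Dy_pow c"
  by (cases c) (simp_all add: Dy_pow_0 Dy_pow_Suc Tone_Tmult_Tone Tone_absorb_prod)

lemma Dy_pow_add: "Dy_pow c \<odot> Dy_pow d = Dy_pow (c + d)"
  by (induction c) (simp_all add: Dy_pow_0 Tone_Tmult_Dy_pow Dy_pow_Suc Tmult_assoc)

lemma Dy_pow_grp: "Dy_pow c \<odot> (grp a b \<odot> X) = smul (\<gamma> ^ (c * b)) (grp a b \<odot> (Dy_pow c \<odot> X))"
proof (induction c arbitrary: X)
  case 0
  then show ?case by (simp add: Dy_pow_0 Tone_absorb_prod Tone_absorb_mid')
next
  case (Suc c)
  have Delta_y_grp: "Delta_y \<odot> grp a b = smul (\<gamma> ^ b) (grp a b \<odot> Delta_y)"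
    by (simp add: Delta_y_def Tmult_tens Hy_def Hg_def Hone_def Hmult_single wmult_eq add.commute)
  have "Dy_pow (Suc c) \<odot> (grp a b \<odot> X) = smul (\<gamma> ^ (c * b)) (Delta_y \<odot> grp a b \<odot> (Dy_pow c \<odot> X))"
    by (simp add: Dy_pow_Suc Tmult_assoc Suc)
  also have "\<dots> = smul (\<gamma> ^ (Suc c * b)) (grp a b \<odot> (Dy_pow (Suc c) \<odot> X))"
    by (simp add: Delta_y_grp Dy_pow_Suc Tmult_assoc power_add mult.commute)
  finally show ?case .
qed

lemma grp_reduce: "grp a b \<odot> X = grp (a + int w * int (b div n)) (b mod n) \<odot> X"
  using nf_tens_Tmult[of "xgw a b" "xgw a b" X] by (simp add: nf_single word_nf_c0)

lemma Dy_pow_qbinomial: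
  "Dy_pow d = (\<Sum>j\<le>d. smul (qbinom \<gamma> d j) (word_nf (0, 0, j) \<otimes> word_nf (0, j, d - j)))"
proof (induction d)
  case 0
  then show ?case using n_pos by (simp add: Dy_pow_0 word_nf_reduced Hone_def)
next
  case (Suc d)
  define X where "X j = word_nf (0, 0, j) \<otimes> word_nf (0, j, Suc d - j)" for j
  have step: "word_nf (0, 0, j) \<otimes> word_nf (0, j, d - j) \<odot> Delta_y
      = smul (\<gamma> ^ (d - j)) (X (Suc j)) + X j" if "j \<le> d" for j
    using that by (simp add: Delta_y_def Tmult_tens Hy_def Hg_def Hone_def Hmult_word_nf_single
        wmult_eq X_def Suc_diff_le add.commute)
  have shift: "(\<Sum>j\<le>d. smul (qbinom \<gamma> d j) (X j))
      = X 0 + (\<Sum>j\<le>d. smul (qbinom \<gamma> d (Suc j)) (X (Suc j)))"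
  proof -
    have "(\<Sum>j\<le>d. smul (qbinom \<gamma> d j) (X j)) = (\<Sum>j\<le>Suc d. smul (qbinom \<gamma> d j) (X j))"
      by (simp add: qbinom_eq_0)
    also have "\<dots> = X 0 + (\<Sum>j\<le>d. smul (qbinom \<gamma> d (Suc j)) (X (Suc j)))"
      by (subst sum.atMost_Suc_shift) simp
    finally show ?thesis .
  qed
  have "Dy_pow (Suc d)
      = (\<Sum>j\<le>d. smul (qbinom \<gamma> d j * \<gamma> ^ (d - j)) (X (Suc j))) + (\<Sum>j\<le>d. smul (qbinom \<gamma> d j) (X j))"
    by (simp add: Dy_pow_Suc_right Suc.IH Tmult_sum_left step sum.distrib)
  also have "\<dots> = X 0 + (\<Sum>j\<le>d. smul (qbinom \<gamma> (Suc d) (Suc j)) (X (Suc j)))"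
    by (simp add: shift sum.distrib[symmetric] smul_add_left[symmetric] algebra_simps)
  also have "\<dots> = (\<Sum>j\<le>Suc d. smul (qbinom \<gamma> (Suc d) j) (X j))"
    by (simp only: sum.atMost_Suc_shift) simp
  finally show ?case by (simp add: X_def)
qed

text \<open>\<open>\<Delta>(y)\<^sup>n = \<Delta>(1 - x\<^sup>w)\<close>: the comultiplication respects the relation \<open>y\<^sup>n = 1 - x\<^sup>w\<close>.\<close>
lemma Dy_pow_n: "Dy_pow n = Tone - grp (int w) 0"
proof -
  have "Dy_pow n = (\<Sum>j\<in>{0, n}. smul (qbinom \<gamma> n j) (word_nf (0, 0, j) \<otimes> word_nf (0, j, n - j)))"
    unfolding Dy_pow_qbinomial by (rule sum.mono_neutral_right) (auto simp: qbinom_gamma_eq_0)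
  also have "\<dots> = Hone \<otimes> (Hone - xgw (int w) 0) + (Hone - xgw (int w) 0) \<otimes> xgw (int w) 0"
    using n_pos by (simp add: qbinom_self word_nf_reduced word_nf_c0 Hone_def normalize_def
        single_uminus)
  also have "\<dots> = Tone - grp (int w) 0" by simp
  finally show ?thesis .
qed

lemma Delta_single: "Del (Poly_Mapping.single s c) = smul c (Delta_basis n w \<gamma> s)"
  by (simp add: Delta_def)

lemma Delta_add [simp]: "Del (p + q) = Del p + Del q" by (simp add: Delta_def)
lemma Delta_smul [simp]: "Del (smul c p) = smul c (Del p)" by (simp add: Delta_def)
lemma Delta_zero [simp]: "Del 0 = 0" by (simp add: Delta_def)
lemma Delta_minus [simp]: "Del (- p) = - Del p" by (simp add: Delta_def)

lemma Delta_word_nf_expand: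
  "Del (word_nf (a, b, c)) = (\<Sum>j\<le>c div n. smul ((-1)^j * of_nat ((c div n) choose j))
      (grp (a + int w * int (b div n) + int w * int j) (b mod n) \<odot> Dy_pow (c mod n)))"
  by (simp add: Delta_def normalize_eq_xbinom linext_xbinom Delta_basis_eq)

text \<open>The comultiplication is well defined on unreduced words; the only nontrivial case is
  passing from \<open>y\<^sup>n\<^sup>-\<^sup>1\<close> to \<open>y\<^sup>n\<close>, where \<^const>\<open>word_nf\<close> produces the factor \<open>1 - x\<^sup>w\<close>.\<close>
lemma Delta_word_nf: "Del (word_nf (a, b, c)) = grp a b \<odot> Dy_pow c"
proof (induction c arbitrary: a b)
  case 0
  then show ?case by (simp add: Delta_word_nf_expand grp_reduce[of a b])
next
  case (Suc c)
  define a1 where "a1 = a + int w * int (b div n)"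
  define q where "q = c div n"
  define e where "e = c mod n"
  have "Del (word_nf (a, b, Suc c)) = Del (word_nf (a, b, c)) \<odot> Delta_y"
  proof (cases "Suc e = n")
    case False
    then have "Suc c mod n = Suc e" "Suc c div n = q"
      by (simp_all add: mod_Suc div_Suc e_def q_def)
    then show ?thesis
      by (simp add: Delta_word_nf_expand a1_def q_def e_def Dy_pow_Suc_right Tmult_assoc
          Tmult_sum_left)
  next
    case True
    then have qe: "Suc c mod n = 0" "Suc c div n = Suc q"
      by (simp_all add: mod_Suc div_Suc e_def q_def)
    have Dy_pow_n': "Dy_pow n = Dy_pow e \<odot> Delta_y"
      using True Dy_pow_Suc_right[of e] by simp
    define F where "F j = grp (a1 + int w * int j) (b mod n) \<odot> Tone" for j
    have F_Suc: "grp (a1 + int w * int j) (b mod n) \<odot> grp (int w) 0 = F (Suc j)" for j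
      by (simp add: Tmult_tens Hmult_single wmult_eq Hmult_Hone nf_single F_def algebra_simps)
    have "Del (word_nf (a, b, Suc c)) = (\<Sum>j\<le>Suc q. smul ((-1)^j * of_nat (Suc q choose j)) (F j))"
      by (simp add: Delta_word_nf_expand qe a1_def F_def Dy_pow_0)
    also have "\<dots> = (\<Sum>j\<le>q. smul ((-1)^j * of_nat (q choose j)) (F j))
        - (\<Sum>j\<le>q. smul ((-1)^j * of_nat (q choose j)) (F (Suc j)))"
      by (rule alternating_binomial_Suc_smul)
    also have "\<dots> = (\<Sum>j\<le>q. smul ((-1)^j * of_nat (q choose j))
                        (grp (a1 + int w * int j) (b mod n) \<odot> Dy_pow n))"
      by (simp add: Dy_pow_n F_Suc F_def sum_subtractf)
    also have "\<dots> = Del (word_nf (a, b, c)) \<odot> Delta_y"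
      by (simp add: Delta_word_nf_expand a1_def q_def Tmult_sum_left Tmult_assoc Dy_pow_n'
          e_def[symmetric])
    finally show ?thesis .
  qed
  then show ?case
    by (simp add: Suc.IH Dy_pow_Suc_right Tmult_assoc)
qed

lemma Delta_Hmult_words:
  "Del (Poly_Mapping.single s 1 \<cdot> Poly_Mapping.single t 1)
   = Del (Poly_Mapping.single s 1) \<odot> Del (Poly_Mapping.single t 1)"
proof -
  obtain a b c where s: "s = (a, b, c)" by (cases s)
  obtain a' b' c' where t: "t = (a', b', c')" by (cases t)
  have grp_grp: "grp a b \<odot> (grp a' b' \<odot> X) = grp (a + a') (b + b') \<odot> X" for X
    using nf_tens_Tmult[of "xgw (a + a') (b + b')" "xgw (a + a') (b + b')" X]
    by (simp add: Tmult_assoc[symmetric] Tmult_tens Hmult_single wmult_eq nf_single)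
  have "Del (Poly_Mapping.single s 1) \<odot> Del (Poly_Mapping.single t 1)
      = grp a b \<odot> (Dy_pow c \<odot> (grp a' b' \<odot> Dy_pow c'))"
    by (simp add: Delta_single s t Delta_basis_eq Tmult_assoc)
  also have "\<dots> = smul (\<gamma> ^ (c * b')) (grp (a + a') (b + b') \<odot> Dy_pow (c + c'))"
    by (simp add: Dy_pow_grp grp_grp Dy_pow_add)
  also have "\<dots> = Del (Poly_Mapping.single s 1 \<cdot> Poly_Mapping.single t 1)"
    by (simp add: Hmult_single s t wmult_eq Delta_word_nf)
  finally show ?thesis by simp
qed

lemma Delta_Hmult: "Del (p \<cdot> q) = Del p \<odot> Del q"
proof (induction p rule: poly_mapping_span_induct)
  case basis
  show ?case
    by (induction q rule: poly_mapping_span_induct) (simp_all add: Delta_Hmult_words)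
qed simp_all

end

section \<open>Counit and antipode\<close>

definition eps_word :: "word \<Rightarrow> 'k::comm_ring_1" where
  "eps_word s = (if snd (snd s) = 0 then 1 else 0)"

lemma eps_eq_sum: "eps p = (\<Sum>s\<in>Poly_Mapping.keys p. Poly_Mapping.lookup p s * eps_word s)"
  by (simp add: eps_def eps_word_def)

lemma eps_superset:
  "finite S \<Longrightarrow> Poly_Mapping.keys p \<subseteq> S
   \<Longrightarrow> eps p = (\<Sum>s\<in>S. Poly_Mapping.lookup p s * eps_word s)"
  unfolding eps_eq_sum by (rule sum.mono_neutral_left) (auto simp: in_keys_iff)

lemma eps_add [simp]: "eps (p + q) = eps p + eps q"
proof -
  let ?S = "Poly_Mapping.keys p \<union> Poly_Mapping.keys q \<union> Poly_Mapping.keys (p + q)"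
  have "eps (p + q) = (\<Sum>s\<in>?S. Poly_Mapping.lookup (p + q) s * eps_word s)"
    by (rule eps_superset) auto
  also have "\<dots> = (\<Sum>s\<in>?S. Poly_Mapping.lookup p s * eps_word s)
      + (\<Sum>s\<in>?S. Poly_Mapping.lookup q s * eps_word s)"
    by (simp add: lookup_add distrib_right sum.distrib)
  also have "\<dots> = eps p + eps q"
    by (subst (1 2) eps_superset[symmetric]) auto
  finally show ?thesis .
qed

lemma eps_zero [simp]: "eps 0 = 0"
  by (simp add: eps_def)

lemma eps_single [simp]: "eps (Poly_Mapping.single s c) = c * eps_word s"
  by (cases "c = 0") (simp_all add: eps_eq_sum)

lemma eps_smul [simp]: "eps (smul c p) = c * eps p"
proof -
  have "eps (smul c p) = (\<Sum>s\<in>Poly_Mapping.keys p. Poly_Mapping.lookup (smul c p) s * eps_word s)"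
    by (rule eps_superset) (auto simp: in_keys_iff)
  then show ?thesis by (simp add: eps_eq_sum sum_distrib_left mult.assoc)
qed

lemma eps_minus [simp]: "eps (- p) = - eps p"
  using eps_add[of p "- p"] by (simp add: eq_neg_iff_add_eq_0 add.commute)

lemma eps_sum: "eps (sum f A) = (\<Sum>a\<in>A. eps (f a))"
  by (induction A rule: infinite_finite_induct) auto

lemma eps_xbinom: "eps (xbinom w a b c q) = (if c = 0 \<and> q = 0 then 1 else 0)"
  using choose_alternating_sum[of q]
  by (auto simp: xbinom_def eps_sum eps_word_def simp flip: sum_distrib_right)

context B_algebra
begin

lemma eps_Hmult: "eps (p \<cdot> q) = eps p * eps q"
proof -
  have eps_wmult: "eps (wmult s t) = eps_word s * eps_word t" for s t
    using n_pos by (cases s; cases t) (auto simp: wmult_eq normalize_eq_xbinom eps_xbinom eps_word_def)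
  have "eps (p \<cdot> q) = (\<Sum>s\<in>Poly_Mapping.keys p. Poly_Mapping.lookup p s *
       (\<Sum>t\<in>Poly_Mapping.keys q. Poly_Mapping.lookup q t * (eps_word s * eps_word t)))"
    by (simp add: hmul_def bilin_eq_linext linext_def eps_sum eps_wmult)
  also have "\<dots> = (\<Sum>s\<in>Poly_Mapping.keys p. \<Sum>t\<in>Poly_Mapping.keys q.
      (Poly_Mapping.lookup p s * eps_word s) * (Poly_Mapping.lookup q t * eps_word t))"
    by (simp only: sum_distrib_left) (simp only: mult_ac)
  also have "\<dots> = eps p * eps q"
    by (simp only: eps_eq_sum sum_product)
  finally show ?thesis .
qed

abbreviation S_g :: "'k H" where "S_g \<equiv> Sg n w"
abbreviation S_y :: "'k H" where "S_y \<equiv> Sy n w \<gamma>"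

lemma gamma_nonzero: "\<gamma> \<noteq> 0"
  using gamma_pow_n n_pos by (metis power_0_left not_gr0 zero_neq_one)

lemma Sg_eq: "S_g = xgw (- int w) (n - 1)"
  using n_pos by (simp add: Sg_def xg_def div_eq_minus1 zmod_minus1 nat_diff_distrib)

lemma xg_eq: "xg n w r i = xgw (r + int w * (i div int n)) (nat (i mod int n))"
  by (simp add: xg_def)

lemma nat_mod_less_n: "nat (i mod int n) < n"
  using n_pos by (simp add: nat_less_iff)

lemma nf_xgw: "b < n \<Longrightarrow> nf (xgw a b) = xgw a b"
  using n_pos by (simp add: nf_single word_nf_reduced)

lemma Hg_Hmult_Sg: "Hg \<cdot> S_g = Hone"
  using n_pos by (simp add: Sg_eq Hg_def Hmult_single wmult_eq word_nf_c0 Hone_def)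

lemma Sg_Hmult_Hg: "S_g \<cdot> Hg = Hone"
  using n_pos by (simp add: Sg_eq Hg_def Hmult_single wmult_eq word_nf_c0 Hone_def)

lemma Hy_Hg_commute: "Hy \<cdot> (Hg \<cdot> X) = smul \<gamma> (Hg \<cdot> (Hy \<cdot> X))"
proof -
  have "Hy \<cdot> Hg = smul \<gamma> (Hg \<cdot> Hy)"
    by (simp add: Hy_def Hg_def Hmult_single wmult_eq)
  then show ?thesis by (simp add: Hmult_assoc[symmetric])
qed

lemma Sg_Hg_commute: "S_g \<cdot> (Hg \<cdot> X) = Hg \<cdot> (S_g \<cdot> X)"
  by (simp add: Hmult_assoc[symmetric] Hg_Hmult_Sg Sg_Hmult_Hg)

lemma Sy_Hg_commute: "S_y \<cdot> (Hg \<cdot> X) = smul \<gamma> (Hg \<cdot> (S_y \<cdot> X))"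
  by (simp add: Sy_def Hmult_assoc Sg_Hg_commute Hy_Hg_commute)

lemma xgw_Hg_commute: "xgw a b \<cdot> Hg = Hg \<cdot> xgw a b"
  by (simp add: Hg_def Hmult_single wmult_eq add.commute)

lemma eps_Sg: "eps S_g = 1" by (simp add: Sg_eq eps_word_def)
lemma eps_Hy: "eps (Hy :: 'k H) = 0" by (simp add: Hy_def eps_word_def)
lemma eps_Sy: "eps S_y = 0" by (simp add: Sy_def eps_Hmult eps_Hy)
lemma eps_xg: "eps (xg n w r i :: 'k H) = 1" by (simp add: xg_def eps_word_def)

lemma Delta_xgw: "b < n \<Longrightarrow> Del (xgw a b) = grp a b"
  using n_pos by (simp add: Delta_single Delta_basis_eq Dy_pow_0 tens_Tmult_Tone nf_xgw)

lemma Delta_Sg: "Del S_g = S_g \<otimes> S_g"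
  using n_pos by (simp add: Sg_eq Delta_xgw)

lemma Tmult_Delta_Hy: "Del Hy \<odot> a \<otimes> b = Hy \<cdot> a \<otimes> Hg \<cdot> b + Hone \<cdot> a \<otimes> Hy \<cdot> b"
proof -
  have "Del Hy = Delta_y \<odot> Tone"
    by (simp add: Hy_def Delta_single Delta_basis_eq Dy_pow_Suc Dy_pow_0 Tone_absorb_prod
        flip: Hone_def)
  then show ?thesis
    by (simp only: Tone_absorb_mid) (simp add: Delta_y_def Tmult_tens)
qed

lemma Delta_Sy: "Del S_y = S_y \<otimes> Hone + S_g \<otimes> S_y"
proof -
  have "nf S_g = S_g" using n_pos by (simp add: Sg_eq nf_xgw)
  then show ?thesis
    by (simp add: Sy_def Delta_Hmult Tmult_Delta_Hy Delta_Sg Tmult_tens Hg_Hmult_Sg Hone_Hmult)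
qed

section \<open>The comatrix\<close>

context
  fixes \<beta> :: 'k and r i :: int
begin

abbreviation C :: "nat \<Rightarrow> nat \<Rightarrow> 'k H" where "C k l \<equiv> cmat n w \<gamma> \<beta> r i k l"

lemma cmat_eq_0: "k < l \<Longrightarrow> C k l = 0"
  by (induction k arbitrary: l) (simp_all add: Let_def)

lemma cmat_Suc:
  "C (Suc k) l = C k l \<cdot> S_y + smul (\<beta> * inverse (\<gamma> ^ l)) (Hy \<cdot> C k l \<cdot> S_g)
     + (if l = 0 then 0 else C k (l - 1) \<cdot> S_g)"
  by (cases "l = 0"; cases "l < Suc k"; cases "l = Suc k") (auto simp: Let_def cmat_eq_0)

lemma nf_cmat: "nf (C k l) = C k l"
proof (induction k)
  case 0
  then show ?case using nat_mod_less_n by (simp add: xg_eq nf_xgw)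
next
  case (Suc k)
  then show ?case by (simp add: cmat_Suc nf_Hmult del: cmat.simps)
qed

lemma eps_cmat: "eps (C k l) = (if k = l then 1 else 0)"
proof (induction k arbitrary: l)
  case 0
  then show ?case by (simp add: eps_xg)
next
  case (Suc k)
  then show ?case
    by (auto simp: cmat_Suc eps_Hmult eps_Sy eps_Hy eps_Sg simp del: cmat.simps)
qed

lemma cmat_Hg_commute: "C p l \<cdot> (Hg \<cdot> X) = smul (\<gamma> ^ p / \<gamma> ^ l) (Hg \<cdot> (C p l \<cdot> X))"
proof (induction p arbitrary: l X)
  case 0
  then show ?case
    by (simp add: xg_eq Hmult_assoc[symmetric] xgw_Hg_commute)
next
  case (Suc p)
  then show ?case
    using gamma_nonzero
    by (cases l) (simp_all add: cmat_Suc Hmult_assoc Sy_Hg_commute Sg_Hg_commute Hy_Hg_commute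
        mult_ac del: cmat.simps)
qed

lemma Hg_cmat_Sg: "Hg \<cdot> C p l \<cdot> S_g = smul (\<gamma> ^ l / \<gamma> ^ p) (C p l)"
proof -
  have "C p l = smul (\<gamma> ^ p / \<gamma> ^ l) (Hg \<cdot> C p l \<cdot> S_g)"
    using cmat_Hg_commute[of p l S_g]
    by (simp add: Hg_Hmult_Sg Hmult_Hone nf_cmat Hmult_assoc)
  then have "smul (\<gamma> ^ l / \<gamma> ^ p) (C p l)
      = smul (\<gamma> ^ l / \<gamma> ^ p * (\<gamma> ^ p / \<gamma> ^ l)) (Hg \<cdot> C p l \<cdot> S_g)"
    by (metis smul_smul)
  then show ?thesis using gamma_nonzero by simp
qed

lemma sum_cmat_Suc:
  "(\<Sum>q\<le>Suc k. C (Suc k) q \<otimes> C q l)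
   = (\<Sum>p\<le>k. C k p \<cdot> S_y \<otimes> C p l + smul (\<beta> * inverse (\<gamma> ^ p)) (Hy \<cdot> C k p \<cdot> S_g \<otimes> C p l))
     + (\<Sum>p\<le>k. C k p \<cdot> S_g \<otimes> C (Suc p) l)"
proof -
  have "(\<Sum>q\<le>Suc k. C (Suc k) q \<otimes> C q l)
      = (\<Sum>q\<le>Suc k. C k q \<cdot> S_y \<otimes> C q l + smul (\<beta> * inverse (\<gamma> ^ q)) (Hy \<cdot> C k q \<cdot> S_g \<otimes> C q l))
        + (\<Sum>q\<le>Suc k. (if q = 0 then 0 else C k (q - 1) \<cdot> S_g) \<otimes> C q l)"
    by (simp add: cmat_Suc sum.distrib del: cmat.simps)
  also have "(\<Sum>q\<le>Suc k. C k q \<cdot> S_y \<otimes> C q l + smul (\<beta> * inverse (\<gamma> ^ q)) (Hy \<cdot> C k q \<cdot> S_g \<otimes> C q l))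
      = (\<Sum>p\<le>k. C k p \<cdot> S_y \<otimes> C p l + smul (\<beta> * inverse (\<gamma> ^ p)) (Hy \<cdot> C k p \<cdot> S_g \<otimes> C p l))"
    by (simp add: cmat_eq_0 del: cmat.simps)
  also have "(\<Sum>q\<le>Suc k. (if q = 0 then 0 else C k (q - 1) \<cdot> S_g) \<otimes> C q l)
      = (\<Sum>p\<le>k. C k p \<cdot> S_g \<otimes> C (Suc p) l)"
    by (simp only: sum.atMost_Suc_shift) (simp del: cmat.simps)
  finally show ?thesis .
qed

lemma Delta_cmat: "Del (C k l) = (\<Sum>p\<le>k. C k p \<otimes> C p l)"
proof (induction k arbitrary: l)
  case 0
  then show ?case
    using nat_mod_less_n by (cases "l = 0") (simp_all add: xg_eq Delta_xgw)
next
  case (Suc k)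
  define U where "U p = C k p \<cdot> S_y \<otimes> C p l
      + smul (\<beta> * inverse (\<gamma> ^ p)) (Hy \<cdot> C k p \<cdot> S_g \<otimes> C p l)" for p
  define V where "V p = C k p \<cdot> S_g \<otimes> C (Suc p) l" for p
  have rescale: "\<beta> * inverse (\<gamma> ^ l) * (\<gamma> ^ l / \<gamma> ^ p) = \<beta> * inverse (\<gamma> ^ p)" for p
    using gamma_nonzero by (simp add: field_simps)
  have U_rescaled: "U p = C k p \<cdot> S_y \<otimes> C p l
      + smul (\<beta> * inverse (\<gamma> ^ l)) (Hy \<cdot> C k p \<cdot> S_g \<otimes> smul (\<gamma> ^ l / \<gamma> ^ p) (C p l))" for p
    by (simp only: U_def tens_smul_right smul_smul rescale)
  have V_expand: "V p = C k p \<cdot> S_g \<otimes> C p l \<cdot> S_y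
      + smul (\<beta> * inverse (\<gamma> ^ l)) (C k p \<cdot> S_g \<otimes> Hy \<cdot> C p l \<cdot> S_g)
      + (if l = 0 then 0 else C k p \<cdot> S_g \<otimes> C p (l - 1) \<cdot> S_g)" for p
    by (simp add: V_def cmat_Suc del: cmat.simps)
  have "Del (C (Suc k) l) = Del (C k l) \<odot> Del S_y
      + smul (\<beta> * inverse (\<gamma> ^ l)) (Del Hy \<odot> Del (C k l) \<odot> Del S_g)
      + (if l = 0 then 0 else Del (C k (l - 1)) \<odot> Del S_g)"
    by (simp add: cmat_Suc Delta_Hmult del: cmat.simps)
  also have "\<dots> = (\<Sum>p\<le>k. C k p \<cdot> S_y \<otimes> C p l + C k p \<cdot> S_g \<otimes> C p l \<cdot> S_y)
      + smul (\<beta> * inverse (\<gamma> ^ l))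
          (\<Sum>p\<le>k. Hy \<cdot> C k p \<cdot> S_g \<otimes> smul (\<gamma> ^ l / \<gamma> ^ p) (C p l)
                 + C k p \<cdot> S_g \<otimes> Hy \<cdot> C p l \<cdot> S_g)
      + (if l = 0 then 0 else (\<Sum>p\<le>k. C k p \<cdot> S_g \<otimes> C p (l - 1) \<cdot> S_g))"
    by (simp add: Suc.IH Delta_Sy Delta_Sg Tmult_sum_left Tmult_sum_right Tmult_Delta_Hy
        Tmult_tens Hmult_Hone Hone_Hmult nf_cmat Hg_cmat_Sg sum.distrib del: cmat.simps)
  also have "\<dots> = (\<Sum>p\<le>k. U p) + (\<Sum>p\<le>k. V p)"
    by (cases "l = 0")
      (simp_all add: U_rescaled V_expand sum.distrib smul_sum_right add_ac del: cmat.simps)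
  finally show ?case
    by (simp only: U_def V_def sum_cmat_Suc)
qed

end

end

theorem corollary3p13:
  fixes n w :: nat and \<gamma> \<beta> :: "'k::field_char_0" and r i :: int and m :: nat
  assumes alg_closed: "\<forall>p :: 'k poly. degree p > 0 \<longrightarrow> (\<exists>z. poly p z = 0)"
    and n_pos: "n > 0" and w_pos: "w > 0"
    and prim: "\<gamma> ^ n = 1" "\<forall>j. 0 < j \<and> j < n \<longrightarrow> \<gamma> ^ j \<noteq> 1"
    and beta: "\<beta> \<noteq> 0"
  shows "\<forall>k\<le>m. \<forall>l\<le>m.
     Delta n w \<gamma> (Amat n w \<gamma> \<beta> r i m k l)
       = (\<Sum>p\<le>m. tens (Amat n w \<gamma> \<beta> r i m k p) (Amat n w \<gamma> \<beta> r i m p l))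
   \<and> eps (Amat n w \<gamma> \<beta> r i m k l) = (if k = l then 1 else 0)"
proof -
  interpret B_algebra n w \<gamma> using n_pos prim by unfold_locales auto
  have Amat_eq: "Amat n w \<gamma> \<beta> r i m k l = cmat n w \<gamma> \<beta> r i k l" if "k \<le> m" for k l
    using that by (auto simp: Amat_def cmat_eq_0 simp del: cmat.simps)
  show ?thesis
  proof (intro allI impI conjI)
    fix k l assume k: "k \<le> m" and "l \<le> m"
    have "(\<Sum>p\<le>m. tens (Amat n w \<gamma> \<beta> r i m k p) (Amat n w \<gamma> \<beta> r i m p l))
        = (\<Sum>p\<le>k. cmat n w \<gamma> \<beta> r i k p \<otimes> cmat n w \<gamma> \<beta> r i p l)"
      using k by (intro sum.mono_neutral_cong_right) (auto simp: Amat_eq cmat_eq_0 simp del: cmat.simps)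
    then show "Delta n w \<gamma> (Amat n w \<gamma> \<beta> r i m k l)
        = (\<Sum>p\<le>m. tens (Amat n w \<gamma> \<beta> r i m k p) (Amat n w \<gamma> \<beta> r i m p l))"
      using k by (simp add: Amat_eq Delta_cmat del: cmat.simps)
    show "eps (Amat n w \<gamma> \<beta> r i m k l) = (if k = l then 1 else 0)"
      using k by (simp add: Amat_eq eps_cmat del: cmat.simps)
  qed
qed
end
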